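(* Let $\Phi:\{1,\dots,B\}\to\mathcal{A}=\{1,\dots,A\}$ and let $\Delta(\varepsilon)$ be a $B\times B$ stochastic matrix family normally parameterized by $\varepsilon\ge0$. Let $v=v(\varepsilon),\hat v=\hat v(\varepsilon):[0,\infty)\to W$ be mappings analytic at $\varepsilon=0$, and let $z_{-n}^0\in\mathcal{A}^{n+1}$ and $k\ge0$ be such that $\mathrm{ord}(p_v(z_{-n}^{-1}))\le k$ and $\mathrm{ord}(p_{\hat v}(z_{-n}^{-1}))\le k$. Then $b_{v,j}(z_{-n}^0)=b_{\hat v,j}(z_{-n}^0)$ for all $j$ with $0\le j\le n-4k-1$.
   Context: $W=\{w\in\mathbb{R}^B: w_i\ge0,\ \sum_i w_i=1\}$. For $a\in\mathcal{A}$, $\Delta_a$ is the $B\times B$ matrix with $\Delta_a(i,j)=\Delta(i,j)$ if $\Phi(j)=a$ and $0$ otherwise. $\Delta(\varepsilon)$ is normally parameterized if (i) each entry is analytic at $\varepsilon=0$, (ii) for $\varepsilon>0$, $\Delta(\varepsilon)$ is non-negative and irreducible, (iii) for every $a$, $\Delta_a(0)$ is the zero matrix or has rank one. For a mapping $v$ and a sequence $z_{-n}^0$, $p_v(z_{-n}^{-1})=v\Delta_{z_{-n}}\cdots\Delta_{z_{-1}}\mathbf{1}$, $p_v(z_{-n}^{0})=v\Delta_{z_{-n}}\cdots\Delta_{z_{0}}\mathbf{1}$, and $p_v(z_0\mid z_{-n}^{-1})=p_v(z_{-n}^0)/p_v(z_{-n}^{-1})$; $b_{v,j}(z_{-n}^0)$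 is the coefficient of $\varepsilon^j$ in the Taylor expansion of $p_v(z_0\mid z_{-n}^{-1})$ at $\varepsilon=0$. For $f$ analytic at $0$, $\mathrm{ord}(f)$ is the degree of the first nonzero term of its Taylor series at $0$. *)

theory Defs
  imports "HOL-Analysis.Analysis" "HOL-Library.Extended_Nat"
begin

definition has_taylor_at0 :: "(real \<Rightarrow> real) \<Rightarrow> (nat \<Rightarrow> real) \<Rightarrow> bool" where
  "has_taylor_at0 f c \<longleftrightarrow>
     (\<exists>r>0. \<forall>x. 0 < x \<and> x < r \<longrightarrow> (\<lambda>n. c n * x ^ n) sums f x)"

definition analytic_at0 :: "(real \<Rightarrow> real) \<Rightarrow> bool" where
  "analytic_at0 f \<longleftrightarrow>
     (\<exists>c. \<exists>r>0. \<forall>x. 0 \<le> x \<and> x < r \<longrightarrow> (\<lambda>n. c n * x ^ n) sums f x)"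

definition taylor_coeff :: "(real \<Rightarrow> real) \<Rightarrow> nat \<Rightarrow> real" where
  "taylor_coeff f j = (THE c. has_taylor_at0 f c) j"

definition ord0 :: "(real \<Rightarrow> real) \<Rightarrow> enat" where
  "ord0 f = (if \<exists>j. taylor_coeff f j \<noteq> 0
             then enat (LEAST j. taylor_coeff f j \<noteq> 0) else \<infinity>)"

definition matpow :: "real^'b^'b \<Rightarrow> nat \<Rightarrow> real^'b^'b" where
  "matpow M m = (((**) M) ^^ m) (mat 1)"

definition nonneg_mat :: "real^'b^'b \<Rightarrow> bool" where
  "nonneg_mat M \<longleftrightarrow> (\<forall>i j. M $ i $ j \<ge> 0)"

definition irreducible_mat :: "real^'b^'b \<Rightarrow> bool" where
  "irreducible_mat M \<longleftrightarrow> (\<forall>i j. \<exists>m. matpow M m $ i $ j > 0)"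

definition stochastic_mat :: "real^'b^'b \<Rightarrow> bool" where
  "stochastic_mat M \<longleftrightarrow> nonneg_mat M \<and> (\<forall>i. (\<Sum>j\<in>UNIV. M $ i $ j) = 1)"

definition prob_simplex :: "(real^'b) set" where
  "prob_simplex = {w. (\<forall>i. w $ i \<ge> 0) \<and> (\<Sum>i\<in>UNIV. w $ i) = 1}"

definition Delta_sub :: "('b \<Rightarrow> 'a) \<Rightarrow> real^'b^'b \<Rightarrow> 'a \<Rightarrow> real^'b^'b" where
  "Delta_sub \<Phi> M a = (\<chi> i j. if \<Phi> j = a then M $ i $ j else 0)"

definition normally_parameterized ::
  "('b::finite \<Rightarrow> 'a) \<Rightarrow> (real \<Rightarrow> real^'b^'b) \<Rightarrow> bool" where
  "normally_parameterized \<Phi> \<Delta> \<longleftrightarrow>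
     (\<forall>i j. analytic_at0 (\<lambda>\<epsilon>. \<Delta> \<epsilon> $ i $ j)) \<and>
     (\<forall>\<epsilon>>0. nonneg_mat (\<Delta> \<epsilon>) \<and> irreducible_mat (\<Delta> \<epsilon>)) \<and>
     (\<forall>a. Delta_sub \<Phi> (\<Delta> 0) a = 0 \<or> rank (Delta_sub \<Phi> (\<Delta> 0) a) = 1)"

definition pv :: "('b::finite \<Rightarrow> 'a) \<Rightarrow> (real \<Rightarrow> real^'b^'b) \<Rightarrow> (real \<Rightarrow> real^'b)
                   \<Rightarrow> 'a list \<Rightarrow> real \<Rightarrow> real" where
  "pv \<Phi> \<Delta> v zs \<epsilon> =
     (v \<epsilon> v* foldr (\<lambda>a M. Delta_sub \<Phi> (\<Delta> \<epsilon>) a ** M) zs (mat 1)) \<bullet> (\<chi> i. 1)"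

text \<open>The block z_{-n}^{-1} (as a list, oldest first) and z_{-n}^0.\<close>
definition past :: "(int \<Rightarrow> 'a) \<Rightarrow> nat \<Rightarrow> 'a list" where
  "past z n = map z [- int n..-1]"

definition block :: "(int \<Rightarrow> 'a) \<Rightarrow> nat \<Rightarrow> 'a list" where
  "block z n = map z [- int n..0]"

definition cond_pv where
  "cond_pv \<Phi> \<Delta> v z n = (\<lambda>\<epsilon>. pv \<Phi> \<Delta> v (block z n) \<epsilon> / pv \<Phi> \<Delta> v (past z n) \<epsilon>)"

definition bcoef where
  "bcoef \<Phi> \<Delta> v z n j = taylor_coeff (cond_pv \<Phi> \<Delta> v z n) j"

end

theory Submission
  imports Defs "HOL-Analysis.FPS_Convergence"
begin

text \<open>Write \<open>P\<close> for the product of the matrices \<open>\<Delta>\<^sub>z\<close> along the past \<open>z\<^sub>-\<^sub>n\<^sup>-\<^sup>1\<close>,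
  expanded as a matrix of power series in \<open>\<epsilon>\<close>. Then \<open>p\<^sub>v(z\<^sub>0 | z\<^sub>-\<^sub>n\<^sup>-\<^sup>1)\<close> is the quotient
  \<open>N\<^sub>v / D\<^sub>v\<close> with \<open>N\<^sub>v = v P \<Delta>\<^sub>z\<^sub>0 \<one>\<close> and \<open>D\<^sub>v = v P \<one>\<close>; since \<open>0 \<le> N\<^sub>v \<le> D\<^sub>v\<close>, the
  quotient is again a power series. Normality says that every 2-by-2 minor of each
  \<open>\<Delta>\<^sub>a\<close> vanishes at \<open>\<epsilon> = 0\<close>, so by Cauchy--Binet every 2-by-2 minor of \<open>P\<close> vanishes to
  order \<open>n\<close>. The cross difference \<open>N\<^sub>v D\<^sub>w - N\<^sub>w D\<^sub>v\<close> is a linear combination of these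
  minors, and it equals \<open>D\<^sub>v D\<^sub>w (N\<^sub>v/D\<^sub>v - N\<^sub>w/D\<^sub>w)\<close> with \<open>D\<^sub>v D\<^sub>w\<close> of order at most
  \<open>2k\<close>; hence the two quotients agree below order \<open>n - 2k\<close>.\<close>

text \<open>One-sided, since \<open>\<Delta>(\<epsilon>)\<close> and \<open>v(\<epsilon>)\<close> are only meaningful for \<open>\<epsilon> \<ge> 0\<close>.\<close>
definition has_right_fps_expansion :: "(real \<Rightarrow> real) \<Rightarrow> real fps \<Rightarrow> bool"
    (infixl \<open>has'_right'_fps'_expansion\<close> 60)
  where "f has_right_fps_expansion F \<longleftrightarrow>
           0 < fps_conv_radius F \<and> (\<forall>\<^sub>F x in at_right 0. f x = eval_fps F x)"

lemma eventually_at_right_in_fps_conv_radius: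
  assumes "0 < fps_conv_radius (F :: real fps)"
  shows "\<forall>\<^sub>F x in at_right 0. 0 < x \<and> ereal (x :: real) < fps_conv_radius F"
proof -
  obtain r where r: "0 < ereal r" "ereal r < fps_conv_radius F"
    using ereal_dense2[OF assms] by blast
  then have "0 < r" by simp
  from eventually_at_right_real[OF this] show ?thesis
  proof eventually_elim
    case (elim x)
    then have "ereal x < ereal r" by simp
    with elim r(2) show ?case by (simp add: order.strict_trans[OF _ r(2)])
  qed
qed

lemma has_right_fps_expansion_eventually:
  assumes "f has_right_fps_expansion F"
  shows "\<forall>\<^sub>F x in at_right 0. 0 < x \<and> ereal x < fps_conv_radius F \<and> f x = eval_fps F x"
proof -
  from assms have "0 < fps_conv_radius F" "\<forall>\<^sub>F x in at_right 0. f x = eval_fps F x"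
    by (simp_all add: has_right_fps_expansion_def)
  from eventually_at_right_in_fps_conv_radius[OF this(1)] this(2) show ?thesis
    by eventually_elim auto
qed

lemma tendsto_eval_fps_at_right:
  assumes "0 < fps_conv_radius (F :: real fps)"
  shows "(eval_fps F \<longlongrightarrow> fps_nth F 0) (at_right 0)"
proof -
  have "continuous (at 0 within {0<..}) (eval_fps F)"
    by (rule continuous_eval_fps) (use assms in \<open>simp add: zero_ereal_def\<close>)
  then show ?thesis by (simp add: continuous_within eval_fps_at_0)
qed

lemma has_right_fps_expansion_const: "(\<lambda>x. c) has_right_fps_expansion fps_const c"
  by (simp add: has_right_fps_expansion_def)

lemma has_right_fps_expansion_add:
  assumes "f has_right_fps_expansion F" "g has_right_fps_expansion G"
  shows "(\<lambda>x. f x + g x) has_right_fps_expansion (F + G)"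
proof -
  have "0 < min (fps_conv_radius F) (fps_conv_radius G)"
    using assms by (simp add: has_right_fps_expansion_def)
  then have "0 < fps_conv_radius (F + G)"
    using fps_conv_radius_add by (rule order.strict_trans2)
  moreover have "\<forall>\<^sub>F x in at_right 0. f x + g x = eval_fps (F + G) x"
    using assms[THEN has_right_fps_expansion_eventually]
    by eventually_elim (auto simp: eval_fps_add)
  ultimately show ?thesis unfolding has_right_fps_expansion_def ..
qed

lemma has_right_fps_expansion_mult:
  assumes "f has_right_fps_expansion F" "g has_right_fps_expansion G"
  shows "(\<lambda>x. f x * g x) has_right_fps_expansion (F * G)"
proof -
  have "0 < min (fps_conv_radius F) (fps_conv_radius G)"
    using assms by (simp add: has_right_fps_expansion_def)
  then have "0 < fps_conv_radius (F * G)"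
    using fps_conv_radius_mult by (rule order.strict_trans2)
  moreover have "\<forall>\<^sub>F x in at_right 0. f x * g x = eval_fps (F * G) x"
    using assms[THEN has_right_fps_expansion_eventually]
    by eventually_elim (auto simp: eval_fps_mult)
  ultimately show ?thesis unfolding has_right_fps_expansion_def ..
qed

lemma has_right_fps_expansion_sum:
  assumes "finite S" "\<And>i. i \<in> S \<Longrightarrow> f i has_right_fps_expansion F i"
  shows "(\<lambda>x. \<Sum>i\<in>S. f i x) has_right_fps_expansion (\<Sum>i\<in>S. F i)"
  using assms
  by (induction S rule: finite_induct)
     (auto simp: has_right_fps_expansion_add
           intro: has_right_fps_expansion_const[of 0, simplified])

lemma fps_eq_0_if_eval_eventually_0:
  assumes "0 < fps_conv_radius (F :: real fps)" "\<forall>\<^sub>F x in at_right 0. eval_fps F x = 0"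
  shows "F = 0"
proof (rule ccontr)
  assume "F \<noteq> 0"
  define G where "G = fps_shift (subdegree F) F"
  have "fps_nth G 0 \<noteq> 0" using \<open>F \<noteq> 0\<close> by (simp add: G_def)
  have "\<forall>\<^sub>F x in at_right 0. eval_fps G x = 0"
    using assms(2) eventually_at_right_in_fps_conv_radius[OF assms(1)]
    by eventually_elim (auto simp: G_def eval_fps_shift)
  then have "(eval_fps G \<longlongrightarrow> 0) (at_right 0)" by (rule tendsto_eventually)
  moreover have "(eval_fps G \<longlongrightarrow> fps_nth G 0) (at_right 0)"
    by (rule tendsto_eval_fps_at_right) (simp add: G_def assms(1))
  ultimately have "fps_nth G 0 = 0"
    using tendsto_unique trivial_limit_at_right_real by blast
  with \<open>fps_nth G 0 \<noteq> 0\<close> show False ..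
qed

lemma has_right_fps_expansion_unique:
  assumes "f has_right_fps_expansion F" "f has_right_fps_expansion G"
  shows "F = G"
proof -
  have "0 < min (fps_conv_radius F) (fps_conv_radius G)"
    using assms by (simp add: has_right_fps_expansion_def)
  then have "0 < fps_conv_radius (F - G)"
    using fps_conv_radius_diff by (rule order.strict_trans2)
  moreover have "\<forall>\<^sub>F x in at_right 0. eval_fps (F - G) x = 0"
    using assms[THEN has_right_fps_expansion_eventually]
    by eventually_elim (auto simp: eval_fps_diff)
  ultimately show ?thesis using fps_eq_0_if_eval_eventually_0 by fastforce
qed

lemma has_taylor_at0_iff_has_right_fps_expansion:
  "has_taylor_at0 f c \<longleftrightarrow> f has_right_fps_expansion Abs_fps c"
proof
  assume "has_taylor_at0 f c"
  then obtain r where "r > 0" and r: "\<And>x. 0 < x \<Longrightarrow> x < r \<Longrightarrow> (\<lambda>n. c n * x ^ n) sums f x"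
    unfolding has_taylor_at0_def by blast
  have "summable (\<lambda>n. c n * (r/2) ^ n)" using r[of "r/2"] \<open>r > 0\<close> by (simp add: sums_summable)
  then have "ereal (norm (r/2)) \<le> fps_conv_radius (Abs_fps c)"
    unfolding fps_conv_radius_def fps_nth_Abs_fps by (rule conv_radius_geI)
  moreover have "0 < ereal (norm (r/2))" using \<open>r > 0\<close> by simp
  ultimately have "0 < fps_conv_radius (Abs_fps c)" by (rule order.strict_trans2[rotated])
  moreover have "\<forall>\<^sub>F x in at_right 0. f x = eval_fps (Abs_fps c) x"
    using eventually_at_right_real[OF \<open>r > 0\<close>]
  proof eventually_elim
    case (elim x)
    then show ?case using r[of x] by (simp add: eval_fps_def sums_iff)
  qed
  ultimately show "f has_right_fps_expansion Abs_fps c"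
    unfolding has_right_fps_expansion_def ..
next
  assume "f has_right_fps_expansion Abs_fps c"
  from has_right_fps_expansion_eventually[OF this]
  have "\<exists>b>0. \<forall>x>0. x < b \<longrightarrow>
      0 < x \<and> ereal x < fps_conv_radius (Abs_fps c) \<and> f x = eval_fps (Abs_fps c) x"
    unfolding eventually_at_right_field .
  then obtain b where "b > 0" and b: "\<And>x. 0 < x \<Longrightarrow> x < b \<Longrightarrow>
      ereal x < fps_conv_radius (Abs_fps c) \<and> f x = eval_fps (Abs_fps c) x"
    by blast
  have "(\<lambda>n. c n * x ^ n) sums f x" if "0 < x" "x < b" for x
    using sums_eval_fps[of x "Abs_fps c"] b[OF that] that by simp
  with \<open>b > 0\<close> show "has_taylor_at0 f c" unfolding has_taylor_at0_def by blast
qed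

lemma taylor_coeff_eq_fps_nth:
  assumes "f has_right_fps_expansion F"
  shows "taylor_coeff f = fps_nth F"
proof -
  have "(THE c. has_taylor_at0 f c) = fps_nth F"
  proof (rule the_equality)
    show "has_taylor_at0 f (fps_nth F)"
      using assms by (simp add: has_taylor_at0_iff_has_right_fps_expansion fps_nth_inverse)
    show "c = fps_nth F" if "has_taylor_at0 f c" for c
      using has_right_fps_expansion_unique[OF assms] that
      unfolding has_taylor_at0_iff_has_right_fps_expansion by force
  qed
  then show ?thesis by (intro ext) (simp add: taylor_coeff_def)
qed

lemma ord0_eq_subdegree:
  assumes "f has_right_fps_expansion F"
  shows "ord0 f = (if F = 0 then \<infinity> else enat (subdegree F))"
  by (simp add: ord0_def taylor_coeff_eq_fps_nth[OF assms] subdegree_def fps_nonzero_nth)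

lemma analytic_at0_imp_has_right_fps_expansion:
  assumes "analytic_at0 f"
  shows "\<exists>F. f has_right_fps_expansion F \<and> fps_nth F 0 = f 0"
proof -
  obtain c r where "r > 0" and r: "\<And>x. 0 \<le> x \<Longrightarrow> x < r \<Longrightarrow> (\<lambda>n. c n * x ^ n) sums f x"
    using assms unfolding analytic_at0_def by blast
  have "has_taylor_at0 f c" unfolding has_taylor_at0_def using \<open>r > 0\<close> r by auto
  moreover have "c 0 = f 0" using sums_unique2[OF powser_sums_zero r[of 0]] \<open>r > 0\<close> by simp
  ultimately show ?thesis
    by (intro exI[of _ "Abs_fps c"]) (simp add: has_taylor_at0_iff_has_right_fps_expansion)
qed

lemma has_right_fps_expansion_subdegree_mono:
  assumes f: "f has_right_fps_expansion F" and g: "g has_right_fps_expansion G"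
    and le: "\<forall>\<^sub>F x in at_right 0. 0 \<le> f x \<and> f x \<le> g x"
  shows "F = 0 \<or> subdegree G \<le> subdegree F"
proof (rule ccontr)
  assume "\<not> (F = 0 \<or> subdegree G \<le> subdegree F)"
  then have "F \<noteq> 0" and lt: "subdegree F < subdegree G" by auto
  define a where "a = subdegree F"
  define F' G' where "F' = fps_shift a F" and "G' = fps_shift a G"
  have "\<forall>\<^sub>F x in at_right 0. 0 \<le> eval_fps F' x \<and> eval_fps F' x \<le> eval_fps G' x"
    using le f[THEN has_right_fps_expansion_eventually] g[THEN has_right_fps_expansion_eventually]
  proof eventually_elim
    case (elim x)
    then have "eval_fps F' x = f x / x ^ a" "eval_fps G' x = g x / x ^ a"
      using lt by (auto simp: F'_def G'_def a_def eval_fps_shift)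
    moreover have "x ^ a > 0" using elim by simp
    ultimately show ?case using elim by (simp add: divide_right_mono)
  qed
  moreover have "(eval_fps F' \<longlongrightarrow> fps_nth F a) (at_right 0)"
    using tendsto_eval_fps_at_right[of F'] f by (simp add: F'_def has_right_fps_expansion_def)
  moreover have "(eval_fps G' \<longlongrightarrow> 0) (at_right 0)"
    using tendsto_eval_fps_at_right[of G'] g lt nth_less_subdegree_zero[OF lt]
    by (simp add: G'_def a_def has_right_fps_expansion_def)
  ultimately have "0 \<le> fps_nth F a" "fps_nth F a \<le> 0"
    by (auto intro: tendsto_le[OF trivial_limit_at_right_real] elim: eventually_mono)
  with \<open>F \<noteq> 0\<close> show False by (simp add: a_def)
qed

lemma has_right_fps_expansion_divide:
  assumes f: "f has_right_fps_expansion F" and g: "g has_right_fps_expansion G"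
    and "G \<noteq> 0" and sub: "F = 0 \<or> subdegree G \<le> subdegree F"
  shows "(\<lambda>x. f x / g x) has_right_fps_expansion (F / G)" and "F = G * (F / G)"
proof -
  define d where "d = subdegree G"
  define F' G' where "F' = fps_shift d F" and "G' = fps_shift d G"
  have "F = F' * fps_X ^ d" "G = G' * fps_X ^ d"
    using sub by (auto simp: F'_def G'_def d_def fps_shift_times_fps_X_power)
  moreover have "fps_nth G' 0 \<noteq> 0" using \<open>G \<noteq> 0\<close> by (simp add: G'_def d_def)
  ultimately have FG: "F / G = F' * inverse G'"
    by (simp add: fps_divide_cancel fps_divide_unit)
  show eq: "F = G * (F / G)"
    using sub \<open>G \<noteq> 0\<close> fps_times_divide_eq[of G F] by (auto simp: mult.commute)
  have "0 < fps_conv_radius G'" using g by (simp add: G'_def has_right_fps_expansion_def)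
  then have "0 < min (fps_conv_radius F') (fps_conv_radius (inverse G'))"
    using f fps_conv_radius_inverse_pos[OF \<open>fps_nth G' 0 \<noteq> 0\<close>]
    by (simp add: F'_def has_right_fps_expansion_def)
  then have rad: "0 < fps_conv_radius (F / G)"
    unfolding FG using fps_conv_radius_mult by (rule order.strict_trans2)
  have "\<forall>\<^sub>F x in at_right 0. eval_fps G' x \<noteq> 0"
    using tendsto_eval_fps_at_right[OF \<open>0 < fps_conv_radius G'\<close>] \<open>fps_nth G' 0 \<noteq> 0\<close>
    by (rule tendsto_imp_eventually_ne)
  then have "\<forall>\<^sub>F x in at_right 0. f x / g x = eval_fps (F / G) x"
    using f[THEN has_right_fps_expansion_eventually] g[THEN has_right_fps_expansion_eventually]
      eventually_at_right_in_fps_conv_radius[OF rad]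
  proof eventually_elim
    case (elim x)
    have "ereal x < fps_conv_radius G'" using elim by (simp add: G'_def)
    then have "g x = eval_fps G' x * x ^ d"
      using elim \<open>G = G' * fps_X ^ d\<close> by (simp add: eval_fps_mult)
    then have "g x \<noteq> 0" using elim by simp
    moreover have "f x = g x * eval_fps (F / G) x"
      using arg_cong[OF eq, of "\<lambda>H. eval_fps H x"] elim by (simp add: eval_fps_mult)
    ultimately show ?case by simp
  qed
  with rad show "(\<lambda>x. f x / g x) has_right_fps_expansion (F / G)"
    unfolding has_right_fps_expansion_def ..
qed

lemma fps_nth_eq_of_cross_difference:
  fixes G G' Q Q' :: "'a::field fps"
  assumes "G \<noteq> 0" "G' \<noteq> 0" "subdegree G \<le> k" "subdegree G' \<le> k"
    and "fps_X ^ n dvd G * Q * G' - G' * Q' * G" and "j + 2 * k < n"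
  shows "fps_nth Q j = fps_nth Q' j"
proof (cases "Q = Q'")
  case False
  have "G * Q * G' - G' * Q' * G = G * G' * (Q - Q')" by (simp add: algebra_simps)
  moreover have "G * G' * (Q - Q') \<noteq> 0" using assms(1,2) False by simp
  ultimately have "n \<le> subdegree G + subdegree G' + subdegree (Q - Q')"
    using assms(1,2,5) False by (simp add: fps_dvd_iff)
  then have "j < subdegree (Q - Q')" using assms(3,4,6) by linarith
  then show ?thesis using nth_less_subdegree_zero by fastforce
qed simp

lemma fps_X_power_dvd_iff: "fps_X ^ m dvd (f :: 'a::field fps) \<longleftrightarrow> (\<forall>i<m. fps_nth f i = 0)"
proof (cases "f = 0")
  case False
  then have "fps_X ^ m dvd f \<longleftrightarrow> m \<le> subdegree f" by (simp add: fps_dvd_iff)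
  also have "\<dots> \<longleftrightarrow> (\<forall>i<m. fps_nth f i = 0)"
    using False by (meson leI nth_less_subdegree_zero order.strict_trans2 subdegree_geI)
  finally show ?thesis .
qed simp

lemma fps_X_power_dvd_double_iff:
  "fps_X ^ m dvd 2 * (f :: 'a::field_char_0 fps) \<longleftrightarrow> fps_X ^ m dvd f"
  by (simp add: fps_X_power_dvd_iff fps_numeral_nth)

lemma sum_products_cross_difference:
  fixes x y :: "'i \<Rightarrow> 'a::comm_ring_1"
  shows "(\<Sum>p\<in>S. x p * P p k) * (\<Sum>q\<in>S. y q * P q l) - (\<Sum>p\<in>S. x p * P p l) * (\<Sum>q\<in>S. y q * P q k)
       = (\<Sum>p\<in>S. \<Sum>q\<in>S. x p * y q * (P p k * P q l - P p l * P q k))"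
  by (simp add: sum_product right_diff_distrib sum_subtractf mult_ac)

definition minor2 :: "'a::comm_ring_1^'n^'m \<Rightarrow> 'm \<Rightarrow> 'm \<Rightarrow> 'n \<Rightarrow> 'n \<Rightarrow> 'a" where
  "minor2 A i j k l = A $ i $ k * A $ j $ l - A $ i $ l * A $ j $ k"

lemma minor2_matrix_mult:
  "minor2 (A ** B) i j k l = (\<Sum>p\<in>UNIV. \<Sum>q\<in>UNIV. A $ i $ p * A $ j $ q * minor2 B p q k l)"
  unfolding minor2_def matrix_matrix_mult_def vec_lambda_beta by (rule sum_products_cross_difference)

text \<open>Cauchy--Binet for 2-by-2 minors, with the sum over unordered pairs of columns
  replaced by twice the sum over ordered pairs.\<close>
lemma minor2_matrix_mult_Cauchy_Binet:
  "2 * minor2 (A ** B) i j k l = (\<Sum>p\<in>UNIV. \<Sum>q\<in>UNIV. minor2 A i j p q * minor2 B p q k l)"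
proof -
  let ?S = "\<lambda>i j. \<Sum>p\<in>UNIV. \<Sum>q\<in>UNIV. A $ i $ p * A $ j $ q * minor2 B p q k l"
  have "?S i j = (\<Sum>p\<in>UNIV. \<Sum>q\<in>UNIV. - (A $ j $ q * A $ i $ p * minor2 B q p k l))"
    by (intro sum.cong refl) (simp add: minor2_def algebra_simps)
  also have "\<dots> = - ?S j i"
    by (simp add: sum_negf) (rule sum.swap)
  finally have "?S i j = - ?S j i" .
  then have "2 * minor2 (A ** B) i j k l = ?S i j - ?S j i"
    by (simp add: minor2_matrix_mult)
  also have "\<dots> = (\<Sum>p\<in>UNIV. \<Sum>q\<in>UNIV. minor2 A i j p q * minor2 B p q k l)"
    by (simp only: minor2_def[of A] left_diff_distrib sum_subtractf) (simp add: mult_ac)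
  finally show ?thesis .
qed

lemma fps_X_power_dvd_minor2_matrix_mult:
  fixes A :: "'a::field_char_0 fps^'n^'m" and B :: "'a fps^'p^'n"
  assumes "\<forall>i j k l. fps_X ^ a dvd minor2 A i j k l" "\<forall>i j k l. fps_X ^ b dvd minor2 B i j k l"
  shows "fps_X ^ (a + b) dvd minor2 (A ** B) i j k l"
proof -
  have "fps_X ^ (a + b) dvd 2 * minor2 (A ** B) i j k l"
    unfolding minor2_matrix_mult_Cauchy_Binet power_add using assms
    by (intro dvd_sum mult_dvd_mono) auto
  then show ?thesis by (simp only: fps_X_power_dvd_double_iff)
qed

lemma minor2_eq_0_if_rank_le_1:
  fixes M :: "real^'n^'m"
  assumes "rank M \<le> 1"
  shows "minor2 M i j k l = 0"
proof (rule ccontr)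
  assume minor: "minor2 M i j k l \<noteq> 0"
  define r s where "r = row i M" and "s = row j M"
  have "s \<noteq> 0"
  proof
    assume "s = 0"
    then have "M $ j $ k = 0" "M $ j $ l = 0"
      unfolding s_def row_def by (metis vec_lambda_beta zero_index)+
    with minor show False by (simp add: minor2_def)
  qed
  have "r \<notin> span {s}"
  proof
    assume "r \<in> span {s}"
    then obtain c where "r = c *\<^sub>R s" by (auto simp: span_singleton)
    then have "M $ i $ k = c * M $ j $ k" "M $ i $ l = c * M $ j $ l"
      by (auto simp: r_def s_def row_def vec_eq_iff)
    with minor show False by (simp add: minor2_def)
  qed
  then have "independent {r, s}"
    using \<open>s \<noteq> 0\<close> by (intro independent_insertI) (auto simp: independent_empty)
  moreover have "{r, s} \<subseteq> rows M" by (auto simp: rows_def r_def s_def)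
  ultimately have "card {r, s} \<le> rank M"
    unfolding row_rank_def by (rule independent_card_le_dim[rotated])
  moreover have "r \<noteq> s" using \<open>r \<notin> span {s}\<close> span_base by blast
  ultimately show False using assms by simp
qed

lemma sum_vector_matrix_mult:
  "(\<Sum>j\<in>UNIV. (u v* X) $ j) = (\<Sum>k\<in>UNIV. u $ k * (\<Sum>j\<in>UNIV. X $ k $ j))"
  unfolding vector_matrix_mult_def by (simp add: sum_distrib_left mult.assoc) (rule sum.swap)

lemma cross_difference_minor2:
  fixes P :: "'a::comm_ring_1^'n^'m" and X :: "'a^'p^'n"
  shows "(\<Sum>j\<in>UNIV. (v v* (P ** X)) $ j) * (\<Sum>j\<in>UNIV. (w v* P) $ j)
           - (\<Sum>j\<in>UNIV. (w v* (P ** X)) $ j) * (\<Sum>j\<in>UNIV. (v v* P) $ j)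
         = (\<Sum>k\<in>UNIV. \<Sum>l\<in>UNIV. (\<Sum>j\<in>UNIV. X $ k $ j) *
              (\<Sum>p\<in>UNIV. \<Sum>q\<in>UNIV. v $ p * w $ q * minor2 P p q k l))"
proof -
  define c where "c k = (\<Sum>j\<in>UNIV. X $ k $ j)" for k
  define x y where "x = v v* P" and "y = w v* P"
  have "(\<Sum>j\<in>UNIV. (v v* (P ** X)) $ j) * (\<Sum>j\<in>UNIV. (w v* P) $ j)
           - (\<Sum>j\<in>UNIV. (w v* (P ** X)) $ j) * (\<Sum>j\<in>UNIV. (v v* P) $ j)
        = (\<Sum>k\<in>UNIV. x $ k * c k) * (\<Sum>l\<in>UNIV. y $ l) - (\<Sum>k\<in>UNIV. y $ k * c k) * (\<Sum>l\<in>UNIV. x $ l)"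
    by (simp add: x_def y_def c_def vector_matrix_mul_assoc[symmetric] sum_vector_matrix_mult)
  also have "\<dots> = (\<Sum>k\<in>UNIV. \<Sum>l\<in>UNIV. c k * (x $ k * y $ l - x $ l * y $ k))"
  proof -
    have "(\<Sum>k\<in>UNIV. x $ k * c k) * (\<Sum>l\<in>UNIV. y $ l) = (\<Sum>k\<in>UNIV. \<Sum>l\<in>UNIV. c k * (x $ k * y $ l))"
      by (simp add: sum_product mult_ac) (rule sum.swap)
    moreover have "(\<Sum>k\<in>UNIV. y $ k * c k) * (\<Sum>l\<in>UNIV. x $ l) = (\<Sum>k\<in>UNIV. \<Sum>l\<in>UNIV. c k * (x $ l * y $ k))"
      by (simp add: sum_product mult_ac) (rule sum.swap)
    ultimately show ?thesis by (simp add: right_diff_distrib sum_subtractf)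
  qed
  also have "\<dots> = (\<Sum>k\<in>UNIV. \<Sum>l\<in>UNIV. c k * (\<Sum>p\<in>UNIV. \<Sum>q\<in>UNIV. v $ p * w $ q * minor2 P p q k l))"
    unfolding x_def y_def vector_matrix_mult_def minor2_def vec_lambda_beta
    by (intro sum.cong refl arg_cong[where f="(*) (c _)"]) (rule sum_products_cross_difference)
  finally show ?thesis by (simp add: c_def)
qed

lemma foldr_matrix_mult_snoc:
  fixes X :: "'c \<Rightarrow> 'a::semiring_1^'n^'n"
  shows "foldr (\<lambda>a M. X a ** M) (zs @ [a]) (mat 1) = foldr (\<lambda>a M. X a ** M) zs (mat 1) ** X a"
proof -
  have "foldr (\<lambda>a M. X a ** M) zs M0 = foldr (\<lambda>a M. X a ** M) zs (mat 1) ** M0" for M0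
    by (induction zs) (simp_all add: matrix_mul_assoc)
  then show ?thesis by simp
qed

lemma foldr_matrix_mult_nonneg:
  fixes X :: "'c \<Rightarrow> real^'n^'n"
  assumes "\<forall>a i j. 0 \<le> X a $ i $ j"
  shows "0 \<le> foldr (\<lambda>a M. X a ** M) zs (mat 1) $ i $ j"
  using assms
  by (induction zs arbitrary: i j) (auto simp: mat_def matrix_matrix_mult_def intro: sum_nonneg)

lemma sum_vector_matrix_mult_le:
  fixes w :: "real^'n" and X :: "real^'p^'n"
  assumes "\<forall>i. 0 \<le> w $ i" "\<forall>i j. 0 \<le> X $ i $ j" "\<forall>i. (\<Sum>j\<in>UNIV. X $ i $ j) \<le> 1"
  shows "0 \<le> (\<Sum>j\<in>UNIV. (w v* X) $ j) \<and> (\<Sum>j\<in>UNIV. (w v* X) $ j) \<le> (\<Sum>j\<in>UNIV. w $ j)"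
  unfolding sum_vector_matrix_mult using assms
  by (auto intro!: sum_nonneg sum_mono mult_nonneg_nonneg simp: mult_left_le)

lemma pv_eq_sum:
  "pv \<Phi> \<Delta> v zs x = (\<Sum>j\<in>UNIV. (v x v* foldr (\<lambda>a M. Delta_sub \<Phi> (\<Delta> x) a ** M) zs (mat 1)) $ j)"
  by (simp add: pv_def inner_vec_def)

lemma pv_snoc_le:
  assumes "stochastic_mat (\<Delta> x)" "v x \<in> prob_simplex"
  shows "0 \<le> pv \<Phi> \<Delta> v (zs @ [a]) x \<and> pv \<Phi> \<Delta> v (zs @ [a]) x \<le> pv \<Phi> \<Delta> v zs x"
proof -
  let ?P = "foldr (\<lambda>a M. Delta_sub \<Phi> (\<Delta> x) a ** M) zs (mat 1)"
  have nonneg: "\<forall>a i j. 0 \<le> Delta_sub \<Phi> (\<Delta> x) a $ i $ j"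
    using assms(1) by (simp add: stochastic_mat_def nonneg_mat_def Delta_sub_def)
  have "(\<Sum>j\<in>UNIV. Delta_sub \<Phi> (\<Delta> x) a $ i $ j) \<le> (\<Sum>j\<in>UNIV. \<Delta> x $ i $ j)" for i
    using assms(1) by (intro sum_mono) (simp add: stochastic_mat_def nonneg_mat_def Delta_sub_def)
  then have "\<forall>i. (\<Sum>j\<in>UNIV. Delta_sub \<Phi> (\<Delta> x) a $ i $ j) \<le> 1"
    using assms(1) by (simp add: stochastic_mat_def)
  moreover have "\<forall>i. 0 \<le> (v x v* ?P) $ i"
    using assms(2) foldr_matrix_mult_nonneg[OF nonneg]
    by (auto simp: vector_matrix_mult_def prob_simplex_def intro!: sum_nonneg)
  ultimately show ?thesis
    using sum_vector_matrix_mult_le[of "v x v* ?P" "Delta_sub \<Phi> (\<Delta> x) a"] nonneg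
    unfolding pv_eq_sum foldr_matrix_mult_snoc vector_matrix_mul_assoc[symmetric] by blast
qed

lemma has_right_fps_expansion_foldr_matrix_mult:
  assumes "\<forall>a i j. (\<lambda>x. X x a $ i $ j) has_right_fps_expansion E a $ i $ j"
  shows "(\<lambda>x. foldr (\<lambda>a M. X x a ** M) zs (mat 1) $ i $ j)
           has_right_fps_expansion foldr (\<lambda>a M. E a ** M) zs (mat 1) $ i $ j"
proof (induction zs arbitrary: i j)
  case Nil
  show ?case
    using has_right_fps_expansion_const[of 1] has_right_fps_expansion_const[of 0] by (simp add: mat_def)
next
  case (Cons a zs)
  then show ?case
    using assms unfolding foldr.simps o_def matrix_matrix_mult_def vec_lambda_beta
    by (intro has_right_fps_expansion_sum has_right_fps_expansion_mult) auto
qed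

lemma has_right_fps_expansion_pv:
  assumes "\<forall>a i j. (\<lambda>x. Delta_sub \<Phi> (\<Delta> x) a $ i $ j) has_right_fps_expansion E a $ i $ j"
    and "\<forall>i. (\<lambda>x. v x $ i) has_right_fps_expansion V $ i"
  shows "pv \<Phi> \<Delta> v zs has_right_fps_expansion (\<Sum>j\<in>UNIV. (V v* foldr (\<lambda>a M. E a ** M) zs (mat 1)) $ j)"
  unfolding pv_eq_sum[abs_def] vector_matrix_mult_def vec_lambda_beta
  using assms has_right_fps_expansion_foldr_matrix_mult[OF assms(1)]
  by (intro has_right_fps_expansion_sum has_right_fps_expansion_mult) auto

lemma fps_X_power_dvd_minor2_foldr:
  fixes E :: "'c \<Rightarrow> 'a::field_char_0 fps^'n^'n"
  assumes "\<forall>a i j k l. fps_X dvd minor2 (E a) i j k l"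
  shows "fps_X ^ length zs dvd minor2 (foldr (\<lambda>a M. E a ** M) zs (mat 1)) i j k l"
proof (induction zs arbitrary: i j k l)
  case (Cons a zs)
  have "\<forall>i j k l. fps_X ^ 1 dvd minor2 (E a) i j k l" using assms by simp
  moreover have "\<forall>i j k l. fps_X ^ length zs dvd minor2 (foldr (\<lambda>a M. E a ** M) zs (mat 1)) i j k l"
    using Cons.IH by blast
  ultimately have "fps_X ^ (1 + length zs) dvd minor2 (E a ** foldr (\<lambda>a M. E a ** M) zs (mat 1)) i j k l"
    by (rule fps_X_power_dvd_minor2_matrix_mult)
  then show ?case by simp
qed simp

lemma fps_X_power_dvd_cross_difference:
  fixes P :: "'a::comm_ring_1 fps^'n^'m" and X :: "'a fps^'p^'n"
  assumes "\<forall>i j k l. fps_X ^ m dvd minor2 P i j k l"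
  shows "fps_X ^ m dvd (\<Sum>j\<in>UNIV. (v v* (P ** X)) $ j) * (\<Sum>j\<in>UNIV. (w v* P) $ j)
           - (\<Sum>j\<in>UNIV. (w v* (P ** X)) $ j) * (\<Sum>j\<in>UNIV. (v v* P) $ j)"
  unfolding cross_difference_minor2 using assms by (intro dvd_sum dvd_mult) auto

lemma analytic_at0_matrix_expansion:
  fixes M :: "real \<Rightarrow> real^'n^'m"
  assumes "\<forall>i j. analytic_at0 (\<lambda>x. M x $ i $ j)"
  obtains F :: "real fps^'n^'m"
  where "\<forall>i j. (\<lambda>x. M x $ i $ j) has_right_fps_expansion F $ i $ j \<and> fps_nth (F $ i $ j) 0 = M 0 $ i $ j"
proof -
  have "\<forall>i j. \<exists>F. (\<lambda>x. M x $ i $ j) has_right_fps_expansion F \<and> fps_nth F 0 = M 0 $ i $ j"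
    using assms analytic_at0_imp_has_right_fps_expansion by blast
  then obtain F where "\<forall>i j. (\<lambda>x. M x $ i $ j) has_right_fps_expansion F i j \<and> fps_nth (F i j) 0 = M 0 $ i $ j"
    by (auto simp: choice_iff)
  then show ?thesis by (intro that[of "\<chi> i j. F i j"]) simp
qed

lemma analytic_at0_vector_expansion:
  fixes v :: "real \<Rightarrow> real^'n"
  assumes "\<forall>i. analytic_at0 (\<lambda>x. v x $ i)"
  obtains V :: "real fps^'n" where "\<forall>i. (\<lambda>x. v x $ i) has_right_fps_expansion V $ i"
proof -
  have "\<forall>i. \<exists>F. (\<lambda>x. v x $ i) has_right_fps_expansion F"
    using assms analytic_at0_imp_has_right_fps_expansion by blast
  then obtain V where "\<forall>i. (\<lambda>x. v x $ i) has_right_fps_expansion V i" by (auto simp: choice_iff)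
  then show ?thesis by (intro that[of "\<chi> i. V i"]) simp
qed

lemma normally_parameterized_expansion:
  assumes "normally_parameterized \<Phi> \<Delta>"
  obtains E :: "'a \<Rightarrow> real fps^'b^'b"
  where "\<forall>a i j. (\<lambda>x. Delta_sub \<Phi> (\<Delta> x) a $ i $ j) has_right_fps_expansion E a $ i $ j"
    and "\<forall>a i j k l. fps_X dvd minor2 (E a) i j k l"
proof -
  obtain F :: "real fps^'b^'b"
    where F: "\<forall>i j. (\<lambda>x. \<Delta> x $ i $ j) has_right_fps_expansion F $ i $ j \<and> fps_nth (F $ i $ j) 0 = \<Delta> 0 $ i $ j"
    using assms analytic_at0_matrix_expansion unfolding normally_parameterized_def by blast
  define E where "E a = (\<chi> i j. if \<Phi> j = a then F $ i $ j else 0)" for a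
  have "\<forall>a i j. (\<lambda>x. Delta_sub \<Phi> (\<Delta> x) a $ i $ j) has_right_fps_expansion E a $ i $ j"
    using F has_right_fps_expansion_const[of 0] by (simp add: E_def Delta_sub_def)
  moreover have "fps_X dvd minor2 (E a) i j k l" for a i j k l
  proof -
    have "Delta_sub \<Phi> (\<Delta> 0) a = 0 \<or> rank (Delta_sub \<Phi> (\<Delta> 0) a) = 1"
      using assms unfolding normally_parameterized_def by blast
    then have "rank (Delta_sub \<Phi> (\<Delta> 0) a) \<le> 1" by auto
    then have "minor2 (Delta_sub \<Phi> (\<Delta> 0) a) i j k l = 0" by (rule minor2_eq_0_if_rank_le_1)
    then have "fps_nth (minor2 (E a) i j k l) 0 = 0"
      using F by (simp add: minor2_def E_def Delta_sub_def split: if_splits)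
    then show ?thesis using fps_X_power_dvd_iff[of 1 "minor2 (E a) i j k l"] by simp
  qed
  ultimately show ?thesis using that by blast
qed

lemma block_eq_past_snoc: "block z n = past z n @ [z 0]"
  unfolding block_def past_def using upto_rec2[of "- int n" 0] by simp

lemma cond_pv_expansion:
  assumes "\<forall>x\<ge>0. stochastic_mat (\<Delta> x)" and "\<forall>x\<ge>0. v x \<in> prob_simplex"
    and E: "\<forall>a i j. (\<lambda>x. Delta_sub \<Phi> (\<Delta> x) a $ i $ j) has_right_fps_expansion E a $ i $ j"
    and V: "\<forall>i. (\<lambda>x. v x $ i) has_right_fps_expansion V $ i"
    and ord: "ord0 (pv \<Phi> \<Delta> v zs) \<le> enat k"
  defines "P \<equiv> foldr (\<lambda>a M. E a ** M) zs (mat 1)"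
  defines "D \<equiv> \<Sum>j\<in>UNIV. (V v* P) $ j"
  obtains Q where "(\<lambda>x. pv \<Phi> \<Delta> v (zs @ [a]) x / pv \<Phi> \<Delta> v zs x) has_right_fps_expansion Q"
    and "(\<Sum>j\<in>UNIV. (V v* (P ** E a)) $ j) = D * Q" and "D \<noteq> 0" and "subdegree D \<le> k"
proof -
  define N where "N = (\<Sum>j\<in>UNIV. (V v* (P ** E a)) $ j)"
  have N: "pv \<Phi> \<Delta> v (zs @ [a]) has_right_fps_expansion N"
    using has_right_fps_expansion_pv[OF E V, of "zs @ [a]"]
    unfolding foldr_matrix_mult_snoc N_def P_def .
  have D: "pv \<Phi> \<Delta> v zs has_right_fps_expansion D"
    unfolding D_def P_def by (rule has_right_fps_expansion_pv[OF E V])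
  have "D \<noteq> 0" "subdegree D \<le> k" using ord ord0_eq_subdegree[OF D] by (auto split: if_splits)
  have "\<forall>\<^sub>F x in at_right 0. 0 \<le> pv \<Phi> \<Delta> v (zs @ [a]) x \<and> pv \<Phi> \<Delta> v (zs @ [a]) x \<le> pv \<Phi> \<Delta> v zs x"
    using eventually_at_right_less[of "0 :: real"]
  proof eventually_elim
    case (elim x)
    then show ?case using assms(1,2) by (intro pv_snoc_le) auto
  qed
  then have "N = 0 \<or> subdegree D \<le> subdegree N"
    by (rule has_right_fps_expansion_subdegree_mono[OF N D])
  from has_right_fps_expansion_divide[OF N D \<open>D \<noteq> 0\<close> this]
  show ?thesis using that \<open>D \<noteq> 0\<close> \<open>subdegree D \<le> k\<close> by (simp add: N_def)
qed

lemma bcoef_eq_of_expansions: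
  assumes stoch: "\<forall>x\<ge>0. stochastic_mat (\<Delta> x)"
    and v_W: "\<forall>x\<ge>0. v x \<in> prob_simplex" and vh_W: "\<forall>x\<ge>0. vh x \<in> prob_simplex"
    and E: "\<forall>a i j. (\<lambda>x. Delta_sub \<Phi> (\<Delta> x) a $ i $ j) has_right_fps_expansion E a $ i $ j"
    and minors: "\<forall>a i j k l. fps_X dvd minor2 (E a) i j k l"
    and V: "\<forall>i. (\<lambda>x. v x $ i) has_right_fps_expansion V $ i"
    and Vh: "\<forall>i. (\<lambda>x. vh x $ i) has_right_fps_expansion Vh $ i"
    and ord_v: "ord0 (pv \<Phi> \<Delta> v (past z n)) \<le> enat k"
    and ord_vh: "ord0 (pv \<Phi> \<Delta> vh (past z n)) \<le> enat k"
    and "j + 2 * k < n"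
  shows "bcoef \<Phi> \<Delta> v z n j = bcoef \<Phi> \<Delta> vh z n j"
proof -
  define P where "P = foldr (\<lambda>a M. E a ** M) (past z n) (mat 1)"
  define num den where "num W = (\<Sum>j\<in>UNIV. (W v* (P ** E (z 0))) $ j)"
    and "den W = (\<Sum>j\<in>UNIV. (W v* P) $ j)" for W
  obtain Q where Q: "cond_pv \<Phi> \<Delta> v z n has_right_fps_expansion Q" and "num V = den V * Q"
    and "den V \<noteq> 0" "subdegree (den V) \<le> k"
    unfolding cond_pv_def block_eq_past_snoc num_def den_def P_def
    by (rule cond_pv_expansion[OF stoch v_W E V ord_v])
  obtain Qh where Qh: "cond_pv \<Phi> \<Delta> vh z n has_right_fps_expansion Qh" and "num Vh = den Vh * Qh"
    and "den Vh \<noteq> 0" "subdegree (den Vh) \<le> k"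
    unfolding cond_pv_def block_eq_past_snoc num_def den_def P_def
    by (rule cond_pv_expansion[OF stoch vh_W E Vh ord_vh])
  have "\<forall>i j k l. fps_X ^ n dvd minor2 P i j k l"
    using fps_X_power_dvd_minor2_foldr[OF minors, of "past z n"] by (simp add: P_def past_def)
  then have "fps_X ^ n dvd num V * den Vh - num Vh * den V"
    unfolding num_def den_def by (rule fps_X_power_dvd_cross_difference)
  then have "fps_X ^ n dvd den V * Q * den Vh - den Vh * Qh * den V"
    using \<open>num V = den V * Q\<close> \<open>num Vh = den Vh * Qh\<close> by simp
  with \<open>den V \<noteq> 0\<close> \<open>den Vh \<noteq> 0\<close> \<open>subdegree (den V) \<le> k\<close> \<open>subdegree (den Vh) \<le> k\<close>
  have "fps_nth Q j = fps_nth Qh j"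
    using \<open>j + 2 * k < n\<close> by (rule fps_nth_eq_of_cross_difference)
  then show ?thesis
    by (simp add: bcoef_def taylor_coeff_eq_fps_nth[OF Q] taylor_coeff_eq_fps_nth[OF Qh])
qed

theorem lemma2p6:
  fixes \<Phi> :: "'b::finite \<Rightarrow> 'a::finite"
    and \<Delta> :: "real \<Rightarrow> real^'b^'b"
    and v vh :: "real \<Rightarrow> real^'b"
    and z :: "int \<Rightarrow> 'a"
    and n k :: nat
  assumes stoch: "\<forall>\<epsilon>\<ge>0. stochastic_mat (\<Delta> \<epsilon>)"
    and normal: "normally_parameterized \<Phi> \<Delta>"
    and v_W: "\<forall>\<epsilon>\<ge>0. v \<epsilon> \<in> prob_simplex"
    and vh_W: "\<forall>\<epsilon>\<ge>0. vh \<epsilon> \<in> prob_simplex"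
    and v_an: "\<forall>i. analytic_at0 (\<lambda>\<epsilon>. v \<epsilon> $ i)"
    and vh_an: "\<forall>i. analytic_at0 (\<lambda>\<epsilon>. vh \<epsilon> $ i)"
    and ord_v: "ord0 (pv \<Phi> \<Delta> v (past z n)) \<le> enat k"
    and ord_vh: "ord0 (pv \<Phi> \<Delta> vh (past z n)) \<le> enat k"
  shows "\<forall>j::nat. int j \<le> int n - 4 * int k - 1 \<longrightarrow>
           bcoef \<Phi> \<Delta> v z n j = bcoef \<Phi> \<Delta> vh z n j"
proof (intro allI impI)
  fix j :: nat
  assume "int j \<le> int n - 4 * int k - 1"
  then have "j + 2 * k < n" by linarith
  obtain E where "\<forall>a i j. (\<lambda>x. Delta_sub \<Phi> (\<Delta> x) a $ i $ j) has_right_fps_expansion E a $ i $ j"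
    and "\<forall>a i j k l. fps_X dvd minor2 (E a) i j k l"
    using normally_parameterized_expansion[OF normal] by blast
  moreover obtain V where "\<forall>i. (\<lambda>x. v x $ i) has_right_fps_expansion V $ i"
    using analytic_at0_vector_expansion[OF v_an] .
  moreover obtain Vh where "\<forall>i. (\<lambda>x. vh x $ i) has_right_fps_expansion Vh $ i"
    using analytic_at0_vector_expansion[OF vh_an] .
  ultimately show "bcoef \<Phi> \<Delta> v z n j = bcoef \<Phi> \<Delta> vh z n j"
    using bcoef_eq_of_expansions[OF stoch v_W vh_W _ _ _ _ ord_v ord_vh \<open>j + 2 * k < n\<close>] by blast
qed

end
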